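(* Let $S=\sum_{i=1}^r u_i^{\otimes 3}$ be a symmetric tensor in $\mathbb{C}^{n\times n\times n}$, where $u_1,\dots,u_r\in\mathbb{C}^n$ are pairwise orthogonal nonzero vectors. Then the slices of $S$ pairwise commute. Moreover, the following are equivalent: (i) all the $u_i$ are isotropic; (ii) the product of any two (possibly equal) slices of $S$ is the zero matrix. Consequently, if (i) holds, then in any other decomposition $S=\sum_{i=1}^q v_i^{\otimes 3}$ with $v_1,\dots,v_q$ pairwise orthogonal nonzero vectors, all the $v_i$ are isotropic.
   Context: The $k$-th slice of a symmetric tensor $S$ is $S_k=(S_{ijk})_{1\le i,j\le n}$. $\langle x,y\rangle=\sum_i x_iy_i$ on $\mathbb{C}^n$ (bilinear, non-Hermitian); $u,v$ are orthogonal if $\langle u,v\rangle=0$; a nonzero vector $v$ is isotropic if $\langle v,v\rangle=0$. *)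

theory Defs
  imports "HOL-Analysis.Analysis"
begin

text \<open>Bilinear (non-Hermitian) form on C^n.\<close>
definition bil :: "complex ^ 'n \<Rightarrow> complex ^ 'n \<Rightarrow> complex" where
  "bil x y = (\<Sum>i\<in>UNIV. x $ i * y $ i)"

definition isotropic :: "complex ^ 'n \<Rightarrow> bool" where
  "isotropic v \<longleftrightarrow> v \<noteq> 0 \<and> bil v v = 0"

type_synonym 'n tensor3 = "'n \<Rightarrow> 'n \<Rightarrow> 'n \<Rightarrow> complex"

definition cube_sum :: "(complex ^ 'n) list \<Rightarrow> 'n tensor3" where
  "cube_sum us = (\<lambda>i j k. (\<Sum>l<length us. (us ! l) $ i * (us ! l) $ j * (us ! l) $ k))"

definition slice :: "'n tensor3 \<Rightarrow> 'n \<Rightarrow> complex ^ 'n ^ 'n" where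
  "slice S k = (\<chi> i j. S i j k)"

definition pairwise_orth_nonzero :: "(complex ^ 'n) list \<Rightarrow> bool" where
  "pairwise_orth_nonzero us \<longleftrightarrow>
     (\<forall>l<length us. us ! l \<noteq> 0) \<and>
     (\<forall>l<length us. \<forall>m<length us. l \<noteq> m \<longrightarrow> bil (us ! l) (us ! m) = 0)"

end

theory Submission
  imports Defs
begin

text \<open>With \<open>q\<^sub>l = \<langle>u\<^sub>l, u\<^sub>l\<rangle>\<close>, orthogonality kills all cross terms in the product of two
slices: \<open>(S\<^sub>k S\<^sub>m)\<^sub>i\<^sub>j = \<Sum>\<^sub>l q\<^sub>l u\<^sub>l\<^sub>i u\<^sub>l\<^sub>k u\<^sub>l\<^sub>j u\<^sub>l\<^sub>m\<close>. This is symmetric in \<open>k, m\<close>, and it vanishes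
when every \<open>q\<^sub>l\<close> does. Conversely, if all these products vanish, contracting the four free
indices with \<open>u\<^sub>l\<^sub>0\<close> leaves only the term \<open>q\<^sub>l\<^sub>0\<^sup>5\<close>, so \<open>u\<^sub>l\<^sub>0\<close> is isotropic. Since condition
(ii) depends only on \<open>S\<close>, it transfers to every other orthogonal decomposition of \<open>S\<close>.\<close>

lemma sum_orthogonal_diagonal:
  fixes N :: nat
  assumes "\<And>l l'. l < N \<Longrightarrow> l' < N \<Longrightarrow> l \<noteq> l' \<Longrightarrow> bil (a l) (a l') = 0"
  shows "(\<Sum>l<N. \<Sum>l'<N. f l l' * bil (a l) (a l')) = (\<Sum>l<N. f l l * bil (a l) (a l))"
proof (rule sum.cong[OF refl])
  fix l assume "l \<in> {..<N}"
  then show "(\<Sum>l'<N. f l l' * bil (a l) (a l')) = f l l * bil (a l) (a l)"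
    using assms by (subst sum.mono_neutral_right[of _ "{l}"]) auto
qed

lemma bil_combination_eq_zero:
  assumes "\<And>j. (\<Sum>l\<in>A. c l * a l $ j) = 0"
  shows "(\<Sum>l\<in>A. c l * bil (a l) v) = 0"
proof -
  have "(\<Sum>l\<in>A. c l * bil (a l) v) = (\<Sum>j\<in>UNIV. v $ j * (\<Sum>l\<in>A. c l * a l $ j))"
    unfolding bil_def sum_distrib_left
    by (subst sum.swap) (simp add: mult_ac)
  also have "\<dots> = 0" using assms by simp
  finally show ?thesis .
qed

lemma slice_mult_cube_sum:
  assumes "\<And>l l'. l < length us \<Longrightarrow> l' < length us \<Longrightarrow> l \<noteq> l' \<Longrightarrow> bil (us ! l) (us ! l') = 0"
  shows "(slice (cube_sum us) k ** slice (cube_sum us) m) $ i $ j =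
    (\<Sum>l<length us. us!l$i * us!l$k * us!l$j * us!l$m * bil (us!l) (us!l))"
proof -
  let ?a = "\<lambda>l. us ! l" and ?N = "length us"
  have "(slice (cube_sum us) k ** slice (cube_sum us) m) $ i $ j =
     (\<Sum>p\<in>UNIV. (\<Sum>l<?N. ?a l$i * ?a l$p * ?a l$k) * (\<Sum>l'<?N. ?a l'$p * ?a l'$j * ?a l'$m))"
    by (simp add: matrix_matrix_mult_def slice_def cube_sum_def)
  also have "\<dots> = (\<Sum>l<?N. \<Sum>l'<?N. \<Sum>p\<in>UNIV. (?a l$i * ?a l$k * ?a l'$j * ?a l'$m) * (?a l$p * ?a l'$p))"
    unfolding sum_product by (subst sum.swap, subst (2) sum.swap) (simp add: mult_ac)
  also have "\<dots> = (\<Sum>l<?N. \<Sum>l'<?N. (?a l$i * ?a l$k * ?a l'$j * ?a l'$m) * bil (?a l) (?a l'))"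
    by (simp add: bil_def sum_distrib_left)
  also have "\<dots> = (\<Sum>l<?N. (?a l$i * ?a l$k * ?a l$j * ?a l$m) * bil (?a l) (?a l))"
    using assms by (rule sum_orthogonal_diagonal)
  finally show ?thesis by simp
qed

lemma slices_commute_cube_sum:
  assumes "pairwise_orth_nonzero us"
  shows "slice (cube_sum us) k ** slice (cube_sum us) m = slice (cube_sum us) m ** slice (cube_sum us) k"
  using assms by (simp add: vec_eq_iff slice_mult_cube_sum pairwise_orth_nonzero_def mult_ac)

lemma slice_products_zero_if_isotropic:
  assumes "pairwise_orth_nonzero us" and "\<forall>u\<in>set us. isotropic u"
  shows "slice (cube_sum us) k ** slice (cube_sum us) m = 0"
proof -
  have "bil (us!l) (us!l) = 0" if "l < length us" for l
    using assms(2) that by (auto simp: isotropic_def)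
  with assms(1) show ?thesis
    by (simp add: vec_eq_iff slice_mult_cube_sum pairwise_orth_nonzero_def)
qed

lemma isotropic_if_slice_products_zero:
  assumes po: "pairwise_orth_nonzero us"
    and zero: "\<forall>k m. slice (cube_sum us) k ** slice (cube_sum us) m = 0"
    and "u \<in> set us"
  shows "isotropic u"
proof -
  obtain l0 where l0: "l0 < length us" "us ! l0 = u"
    using \<open>u \<in> set us\<close> by (auto simp: in_set_conv_nth)
  have orth: "\<And>l l'. l < length us \<Longrightarrow> l' < length us \<Longrightarrow> l \<noteq> l' \<Longrightarrow> bil (us ! l) (us ! l') = 0"
    using po by (simp add: pairwise_orth_nonzero_def)
  let ?a = "\<lambda>l. us ! l" and ?L = "{..<length us}"
  let ?q = "\<lambda>l. bil (?a l) (?a l)" and ?b = "\<lambda>l. bil (?a l) u"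
  have moment4: "(\<Sum>l\<in>?L. ?q l * ?a l$i * ?a l$j * ?a l$k * ?a l$m) = 0" for i j k m
    using slice_mult_cube_sum[OF orth, of k m i j] zero by (simp add: mult_ac)
  have moment3: "(\<Sum>l\<in>?L. ?q l * ?a l$i * ?a l$j * ?a l$k * ?b l) = 0" for i j k
    by (rule bil_combination_eq_zero) (use moment4[of i j k] in \<open>simp add: mult_ac\<close>)
  have moment2: "(\<Sum>l\<in>?L. ?q l * ?a l$i * ?a l$j * ?b l * ?b l) = 0" for i j
    by (rule bil_combination_eq_zero) (use moment3[of i j] in \<open>simp add: mult_ac\<close>)
  have moment1: "(\<Sum>l\<in>?L. ?q l * ?a l$i * ?b l * ?b l * ?b l) = 0" for i
    by (rule bil_combination_eq_zero) (use moment2[of i] in \<open>simp add: mult_ac\<close>)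
  have moment0: "(\<Sum>l\<in>?L. ?q l * ?b l * ?b l * ?b l * ?b l) = 0"
    by (rule bil_combination_eq_zero) (use moment1 in \<open>simp add: mult_ac\<close>)
  also have "(\<Sum>l\<in>?L. ?q l * ?b l * ?b l * ?b l * ?b l) = ?q l0 * ?b l0 * ?b l0 * ?b l0 * ?b l0"
    using orth l0 by (subst sum.mono_neutral_right[of _ "{l0}"]) auto
  finally have "bil u u ^ 5 = 0"
    using l0 by (simp add: eval_nat_numeral mult_ac)
  moreover have "u \<noteq> 0"
    using po l0 by (auto simp: pairwise_orth_nonzero_def)
  ultimately show "isotropic u" by (simp add: isotropic_def)
qed

theorem proposition28:
  fixes us :: "(complex ^ 'n) list"
  assumes "pairwise_orth_nonzero us"
  shows "(\<forall>k l. slice (cube_sum us) k ** slice (cube_sum us) l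
                 = slice (cube_sum us) l ** slice (cube_sum us) k)
     \<and> ((\<forall>u\<in>set us. isotropic u) \<longleftrightarrow>
          (\<forall>k l. slice (cube_sum us) k ** slice (cube_sum us) l = 0))
     \<and> ((\<forall>u\<in>set us. isotropic u) \<longrightarrow>
          (\<forall>vs :: (complex ^ 'n) list. pairwise_orth_nonzero vs \<and> cube_sum vs = cube_sum us
              \<longrightarrow> (\<forall>v\<in>set vs. isotropic v)))"
proof -
  have iff: "(\<forall>u\<in>set ws. isotropic u) \<longleftrightarrow>
      (\<forall>k l. slice (cube_sum ws) k ** slice (cube_sum ws) l = 0)"
    if "pairwise_orth_nonzero ws" for ws :: "(complex ^ 'n) list"
    using that slice_products_zero_if_isotropic isotropic_if_slice_products_zero by blast
  show ?thesis
    using slices_commute_cube_sum[OF assms] iff[OF assms] iff by metis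
qed

end
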